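(* Let $(\mathcal A_1,U,\varphi_1),\dots,(\mathcal A_m,U,\varphi_m)$ be symmetric qualitative formalisms over the same set $U$, and let $\mathfrak R'\subseteq U\times U$ be symmetric ($\mathfrak R'=\mathfrak R'^{-1}$). For each distinct $i,j\in\{1,\dots,m\}$ let $\Rsh_i^j$ be a projection operator from $\mathcal A_i$ to $\mathcal A_j$ such that $\varphi_i(b)\cap\varphi_j(\mathcal B_j)\cap\mathfrak R'\subseteq\varphi_j(\Rsh_i^jb)$ for every atom $b$ of $\mathcal A_i$. Let $\mathcal A$ be the multi-algebra $\mathcal A_1\times\cdots\times\mathcal A_m$ equipped with the projections $\Rsh_i^j$, and let $\varphi:\mathcal A\to2^{U\times U}$ be defined by $\varphi(R)=\bigcap_{i=1}^m\varphi_i(R_i)\cap\mathfrak R'$. Then $(\mathcal A,U,\varphi)$ is a sequential formalism.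
   Context: A finite non-associative algebra is a tuple $(\mathcal A,\cup,\neg,\emptyset,\mathcal B,\diamond,\overline{\cdot},e)$ where $(\mathcal A,\cup,\neg,\emptyset,\mathcal B)$ is a finite Boolean algebra (with $x\cap y=\neg(\neg x\cup\neg y)$) and for all $x,y,z$: $\overline{\overline x}=x$, $\overline{x\cup y}=\overline x\cup\overline y$, $\overline{x\diamond y}=\overline y\diamond\overline x$, $e\diamond x=x\diamond e=x$, $x\diamond(y\cup z)=(x\diamond y)\cup(x\diamond z)$, $(x\diamond y)\cap\overline z=\emptyset\iff(y\diamond z)\cap\overline x=\emptyset$. $\mathcal B$ is the universal relation; $r\subseteq r'$ means $r\cup r'=r'$; atoms are the basic relations. A symmetric qualitative formalism is a triple $(\mathcal A,U,\varphi)$ with $\mathcal A$ a finite non-associative algebra, $U\neq\emptyset$ and $\varphi:\mathcal A\to2^{U\times U}$ with $\varphi(\emptyset)=\emptyset$, $\varphi(\overline r)=\varphi(r)^{-1}$, $\varphi(r\cap r')=\varphi(r)\cap\varphi(r')$, $\varphi(r\cup r')=\varphi(r)\cup\varphi(r')$, $\varphi(r\diamond r')\supseteq(\varphi(r)\circ\varphi(r'))\cap\varphi(\mathcal B)$ ($\circ$ composition of binary relations, $^{-1}$ converse). A projection operator from $\mathcal A$ to $\mathcal A'$ is a map $\Rsh$ with $\Rsh(r\cup r')=\Rsh r\cup\Rsh r'$ and $\Rsh\overline r=\overline{\Rsh r}$. A finite multi-algebra is a product $\mathcal A_1\times\cdots\times\mathcal A_m$ of finite non-associative algebras with projection operators $\Rsh_i^j:\mathcal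 A_i\to\mathcal A_j$ for all distinct $i,j$. Relations $R=(R_1,\dots,R_m)$; $R$ basic if all $R_i$ are atoms; universal relation $\mathcal B=(\mathcal B_1,\dots,\mathcal B_m)$; $\diamond,\cap,\cup,\overline{\cdot}$ and $\subseteq$ componentwise; $B\in R$ means $B$ basic with $B\subseteq R$. The projection closure $\Rsh R$ is obtained by repeatedly replacing $R_j$ by $R_j\cap\Rsh_i^jR_i$ (distinct $i,j$) until a fixed point. A sequential formalism is $(\mathcal A,U,\varphi)$ with $\mathcal A$ a finite multi-algebra, $U\ne\emptyset$, $\varphi:\mathcal A\to 2^{U\times U}$ satisfying for all $R,R'$: $\varphi(\Rsh R)=\varphi(R)$, $\varphi(\overline R)=\varphi(R)^{-1}$, $\varphi((\emptyset,\dots,\emptyset))=\emptyset$, $\varphi(R\diamond R')\supseteq(\varphi(R)\circ\varphi(R'))\cap\varphi(\mathcal B)$, $\varphi(R\cap R')=\varphi(R)\cap\varphi(R')$, $\varphi(R)=\bigcup_{B\in R}\varphi(B)$. *)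

theory Defs
  imports Main
begin

text \<open>A non-associative algebra is given on a carrier set inside some type 'a.
  Fields: union, complement, empty relation, universal relation B, composition,
  converse, identity e.\<close>

record 'a naa =
  carrier :: "'a set"
  join :: "'a \<Rightarrow> 'a \<Rightarrow> 'a"
  neg :: "'a \<Rightarrow> 'a"
  zero :: 'a
  univ :: 'a
  comp :: "'a \<Rightarrow> 'a \<Rightarrow> 'a"
  conv :: "'a \<Rightarrow> 'a"
  ident :: 'a

definition meet :: "'a naa \<Rightarrow> 'a \<Rightarrow> 'a \<Rightarrow> 'a" where
  "meet A x y = neg A (join A (neg A x) (neg A y))"

definition leq :: "'a naa \<Rightarrow> 'a \<Rightarrow> 'a \<Rightarrow> bool" where
  "leq A x y \<longleftrightarrow> join A x y = y"

definition is_atom :: "'a naa \<Rightarrow> 'a \<Rightarrow> bool" where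
  "is_atom A b \<longleftrightarrow> b \<in> carrier A \<and> b \<noteq> zero A \<and>
     (\<forall>x\<in>carrier A. leq A x b \<longrightarrow> x = zero A \<or> x = b)"

definition finite_boolean_algebra :: "'a naa \<Rightarrow> bool" where
  "finite_boolean_algebra A \<longleftrightarrow>
     finite (carrier A) \<and> zero A \<in> carrier A \<and> univ A \<in> carrier A \<and>
     (\<forall>x\<in>carrier A. \<forall>y\<in>carrier A. join A x y \<in> carrier A) \<and>
     (\<forall>x\<in>carrier A. neg A x \<in> carrier A) \<and>
     (\<forall>x\<in>carrier A. \<forall>y\<in>carrier A. join A x y = join A y x) \<and>
     (\<forall>x\<in>carrier A. \<forall>y\<in>carrier A. meet A x y = meet A y x) \<and>
     (\<forall>x\<in>carrier A. \<forall>y\<in>carrier A. \<forall>z\<in>carrier A.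
        join A x (join A y z) = join A (join A x y) z) \<and>
     (\<forall>x\<in>carrier A. \<forall>y\<in>carrier A. \<forall>z\<in>carrier A.
        meet A x (meet A y z) = meet A (meet A x y) z) \<and>
     (\<forall>x\<in>carrier A. \<forall>y\<in>carrier A. join A x (meet A x y) = x) \<and>
     (\<forall>x\<in>carrier A. \<forall>y\<in>carrier A. meet A x (join A x y) = x) \<and>
     (\<forall>x\<in>carrier A. \<forall>y\<in>carrier A. \<forall>z\<in>carrier A.
        meet A x (join A y z) = join A (meet A x y) (meet A x z)) \<and>
     (\<forall>x\<in>carrier A. join A x (zero A) = x) \<and>
     (\<forall>x\<in>carrier A. meet A x (univ A) = x) \<and>
     (\<forall>x\<in>carrier A. join A x (neg A x) = univ A) \<and>
     (\<forall>x\<in>carrier A. meet A x (neg A x) = zero A)"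

definition finite_naa :: "'a naa \<Rightarrow> bool" where
  "finite_naa A \<longleftrightarrow> finite_boolean_algebra A \<and>
     ident A \<in> carrier A \<and>
     (\<forall>x\<in>carrier A. \<forall>y\<in>carrier A. comp A x y \<in> carrier A) \<and>
     (\<forall>x\<in>carrier A. conv A x \<in> carrier A) \<and>
     (\<forall>x\<in>carrier A. conv A (conv A x) = x) \<and>
     (\<forall>x\<in>carrier A. \<forall>y\<in>carrier A. conv A (join A x y) = join A (conv A x) (conv A y)) \<and>
     (\<forall>x\<in>carrier A. \<forall>y\<in>carrier A. conv A (comp A x y) = comp A (conv A y) (conv A x)) \<and>
     (\<forall>x\<in>carrier A. comp A (ident A) x = x \<and> comp A x (ident A) = x) \<and>
     (\<forall>x\<in>carrier A. \<forall>y\<in>carrier A. \<forall>z\<in>carrier A.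
        comp A x (join A y z) = join A (comp A x y) (comp A x z)) \<and>
     (\<forall>x\<in>carrier A. \<forall>y\<in>carrier A. \<forall>z\<in>carrier A.
        (meet A (comp A x y) (conv A z) = zero A) \<longleftrightarrow>
        (meet A (comp A y z) (conv A x) = zero A))"

definition sym_qual_formalism ::
    "'a naa \<Rightarrow> 'u set \<Rightarrow> ('a \<Rightarrow> ('u \<times> 'u) set) \<Rightarrow> bool" where
  "sym_qual_formalism A U \<phi> \<longleftrightarrow> finite_naa A \<and> U \<noteq> {} \<and>
     (\<forall>r\<in>carrier A. \<phi> r \<subseteq> U \<times> U) \<and>
     \<phi> (zero A) = {} \<and>
     (\<forall>r\<in>carrier A. \<phi> (conv A r) = (\<phi> r)\<inverse>) \<and>
     (\<forall>r\<in>carrier A. \<forall>r'\<in>carrier A. \<phi> (meet A r r') = \<phi> r \<inter> \<phi> r') \<and>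
     (\<forall>r\<in>carrier A. \<forall>r'\<in>carrier A. \<phi> (join A r r') = \<phi> r \<union> \<phi> r') \<and>
     (\<forall>r\<in>carrier A. \<forall>r'\<in>carrier A.
        (\<phi> r O \<phi> r') \<inter> \<phi> (univ A) \<subseteq> \<phi> (comp A r r'))"

definition projection_operator :: "'a naa \<Rightarrow> 'a naa \<Rightarrow> ('a \<Rightarrow> 'a) \<Rightarrow> bool" where
  "projection_operator A A' P \<longleftrightarrow>
     (\<forall>r\<in>carrier A. P r \<in> carrier A') \<and>
     (\<forall>r\<in>carrier A. \<forall>r'\<in>carrier A. P (join A r r') = join A' (P r) (P r')) \<and>
     (\<forall>r\<in>carrier A. P (conv A r) = conv A' (P r))"

text \<open>A multi-algebra A_0 x ... x A_(m-1) (indices shifted to 0..m-1) with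
  projections Proj i j from A_i to A_j. Relations are functions R with R i in
  carrier (Alg i) for i < m and R i = undefined otherwise (extensional tuples).\<close>

definition finite_multi_algebra ::
    "nat \<Rightarrow> (nat \<Rightarrow> 'a naa) \<Rightarrow> (nat \<Rightarrow> nat \<Rightarrow> 'a \<Rightarrow> 'a) \<Rightarrow> bool" where
  "finite_multi_algebra m Alg Proj \<longleftrightarrow>
     (\<forall>i<m. finite_naa (Alg i)) \<and>
     (\<forall>i<m. \<forall>j<m. i \<noteq> j \<longrightarrow> projection_operator (Alg i) (Alg j) (Proj i j))"

definition mrels :: "nat \<Rightarrow> (nat \<Rightarrow> 'a naa) \<Rightarrow> (nat \<Rightarrow> 'a) set" where
  "mrels m Alg = {R. (\<forall>i<m. R i \<in> carrier (Alg i)) \<and> (\<forall>i. m \<le> i \<longrightarrow> R i = undefined)}"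

definition mlift :: "nat \<Rightarrow> (nat \<Rightarrow> 'a) \<Rightarrow> nat \<Rightarrow> 'a" where
  "mlift m f = (\<lambda>i. if i < m then f i else undefined)"

definition mzero :: "nat \<Rightarrow> (nat \<Rightarrow> 'a naa) \<Rightarrow> nat \<Rightarrow> 'a" where
  "mzero m Alg = mlift m (\<lambda>i. zero (Alg i))"

definition muniv :: "nat \<Rightarrow> (nat \<Rightarrow> 'a naa) \<Rightarrow> nat \<Rightarrow> 'a" where
  "muniv m Alg = mlift m (\<lambda>i. univ (Alg i))"

definition mcomp :: "nat \<Rightarrow> (nat \<Rightarrow> 'a naa) \<Rightarrow> (nat \<Rightarrow> 'a) \<Rightarrow> (nat \<Rightarrow> 'a) \<Rightarrow> nat \<Rightarrow> 'a" where
  "mcomp m Alg R R' = mlift m (\<lambda>i. comp (Alg i) (R i) (R' i))"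

definition mmeet :: "nat \<Rightarrow> (nat \<Rightarrow> 'a naa) \<Rightarrow> (nat \<Rightarrow> 'a) \<Rightarrow> (nat \<Rightarrow> 'a) \<Rightarrow> nat \<Rightarrow> 'a" where
  "mmeet m Alg R R' = mlift m (\<lambda>i. meet (Alg i) (R i) (R' i))"

definition mconv :: "nat \<Rightarrow> (nat \<Rightarrow> 'a naa) \<Rightarrow> (nat \<Rightarrow> 'a) \<Rightarrow> nat \<Rightarrow> 'a" where
  "mconv m Alg R = mlift m (\<lambda>i. conv (Alg i) (R i))"

definition mleq :: "nat \<Rightarrow> (nat \<Rightarrow> 'a naa) \<Rightarrow> (nat \<Rightarrow> 'a) \<Rightarrow> (nat \<Rightarrow> 'a) \<Rightarrow> bool" where
  "mleq m Alg R R' \<longleftrightarrow> (\<forall>i<m. leq (Alg i) (R i) (R' i))"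

definition mbasic :: "nat \<Rightarrow> (nat \<Rightarrow> 'a naa) \<Rightarrow> (nat \<Rightarrow> 'a) \<Rightarrow> bool" where
  "mbasic m Alg B \<longleftrightarrow> B \<in> mrels m Alg \<and> (\<forall>i<m. is_atom (Alg i) (B i))"

definition basics_in :: "nat \<Rightarrow> (nat \<Rightarrow> 'a naa) \<Rightarrow> (nat \<Rightarrow> 'a) \<Rightarrow> (nat \<Rightarrow> 'a) set" where
  "basics_in m Alg R = {B. mbasic m Alg B \<and> mleq m Alg B R}"

definition proj_step ::
    "nat \<Rightarrow> (nat \<Rightarrow> 'a naa) \<Rightarrow> (nat \<Rightarrow> nat \<Rightarrow> 'a \<Rightarrow> 'a) \<Rightarrow> (nat \<Rightarrow> 'a) \<Rightarrow> (nat \<Rightarrow> 'a) \<Rightarrow> bool" where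
  "proj_step m Alg Proj R S \<longleftrightarrow> (\<exists>i<m. \<exists>j<m. i \<noteq> j \<and>
      S = R(j := meet (Alg j) (R j) (Proj i j (R i))))"

definition proj_fixed ::
    "nat \<Rightarrow> (nat \<Rightarrow> 'a naa) \<Rightarrow> (nat \<Rightarrow> nat \<Rightarrow> 'a \<Rightarrow> 'a) \<Rightarrow> (nat \<Rightarrow> 'a) \<Rightarrow> bool" where
  "proj_fixed m Alg Proj R \<longleftrightarrow> (\<forall>i<m. \<forall>j<m. i \<noteq> j \<longrightarrow>
      meet (Alg j) (R j) (Proj i j (R i)) = R j)"

definition is_proj_closure ::
    "nat \<Rightarrow> (nat \<Rightarrow> 'a naa) \<Rightarrow> (nat \<Rightarrow> nat \<Rightarrow> 'a \<Rightarrow> 'a) \<Rightarrow> (nat \<Rightarrow> 'a) \<Rightarrow> (nat \<Rightarrow> 'a) \<Rightarrow> bool" where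
  "is_proj_closure m Alg Proj R S \<longleftrightarrow>
     (proj_step m Alg Proj)\<^sup>*\<^sup>* R S \<and> proj_fixed m Alg Proj S"

definition sequential_formalism ::
    "nat \<Rightarrow> (nat \<Rightarrow> 'a naa) \<Rightarrow> (nat \<Rightarrow> nat \<Rightarrow> 'a \<Rightarrow> 'a) \<Rightarrow> 'u set \<Rightarrow>
     ((nat \<Rightarrow> 'a) \<Rightarrow> ('u \<times> 'u) set) \<Rightarrow> bool" where
  "sequential_formalism m Alg Proj U \<phi> \<longleftrightarrow>
     finite_multi_algebra m Alg Proj \<and> U \<noteq> {} \<and>
     (\<forall>R\<in>mrels m Alg. \<phi> R \<subseteq> U \<times> U) \<and>
     (\<forall>R\<in>mrels m Alg. \<forall>S. is_proj_closure m Alg Proj R S \<longrightarrow> \<phi> S = \<phi> R) \<and>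
     (\<forall>R\<in>mrels m Alg. \<phi> (mconv m Alg R) = (\<phi> R)\<inverse>) \<and>
     \<phi> (mzero m Alg) = {} \<and>
     (\<forall>R\<in>mrels m Alg. \<forall>R'\<in>mrels m Alg.
        (\<phi> R O \<phi> R') \<inter> \<phi> (muniv m Alg) \<subseteq> \<phi> (mcomp m Alg R R')) \<and>
     (\<forall>R\<in>mrels m Alg. \<forall>R'\<in>mrels m Alg.
        \<phi> (mmeet m Alg R R') = \<phi> R \<inter> \<phi> R') \<and>
     (\<forall>R\<in>mrels m Alg. \<phi> R = (\<Union>B\<in>basics_in m Alg R. \<phi> B))"

end

theory Submission
  imports Defs
begin

text \<open>Every clause of a sequential formalism holds componentwise, because each \<open>\<Phi> i\<close>
  turns the Boolean operations, converse and composition of \<open>Alg i\<close> into the set-theoretic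
  ones, and intersecting with the symmetric relation \<open>Rp\<close> preserves this.
  Two clauses need more. Decomposition into basic relations uses that in a finite Boolean
  algebra the meet of all \<open>z\<close> with \<open>p \<in> \<Phi> z\<close> is an atom still containing \<open>p\<close>.
  Invariance of \<open>\<phi> = interp\<close> under projection closure reduces to
  \<open>interp R \<subseteq> \<Phi> j (Proj i j (R i))\<close>: a pair in \<open>interp R\<close> lies in \<open>\<Phi> i b\<close> for an
  atom \<open>b \<le> R i\<close>, and the soundness hypothesis on atoms together with
  monotonicity of projections puts it into \<open>\<Phi> j (Proj i j (R i))\<close>.\<close>

lemma meet_closed:
  assumes "finite_boolean_algebra A" "x \<in> carrier A" "y \<in> carrier A"
  shows "meet A x y \<in> carrier A"
  using assms by (simp add: finite_boolean_algebra_def meet_def)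

lemma meet_commute:
  assumes "finite_boolean_algebra A" "x \<in> carrier A" "y \<in> carrier A"
  shows "meet A x y = meet A y x"
  using assms by (simp add: finite_boolean_algebra_def)

lemma meet_assoc:
  assumes "finite_boolean_algebra A" "x \<in> carrier A" "y \<in> carrier A" "z \<in> carrier A"
  shows "meet A x (meet A y z) = meet A (meet A x y) z"
  using assms by (simp add: finite_boolean_algebra_def)

lemma meet_univ:
  assumes "finite_boolean_algebra A" "x \<in> carrier A"
  shows "meet A x (univ A) = x"
  using assms by (simp add: finite_boolean_algebra_def)

lemma meet_neg:
  assumes "finite_boolean_algebra A" "x \<in> carrier A"
  shows "meet A x (neg A x) = zero A"
  using assms by (simp add: finite_boolean_algebra_def)

lemma join_neg:
  assumes "finite_boolean_algebra A" "x \<in> carrier A"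
  shows "join A x (neg A x) = univ A"
  using assms by (simp add: finite_boolean_algebra_def)

lemma neg_closed:
  assumes "finite_boolean_algebra A" "x \<in> carrier A"
  shows "neg A x \<in> carrier A"
  using assms by (simp add: finite_boolean_algebra_def)

lemma univ_closed:
  assumes "finite_boolean_algebra A"
  shows "univ A \<in> carrier A"
  using assms by (simp add: finite_boolean_algebra_def)

lemma meet_idem:
  assumes A: "finite_boolean_algebra A" and x: "x \<in> carrier A"
  shows "meet A x x = x"
proof -
  have "join A x (meet A x x) = x" "meet A x (join A x (meet A x x)) = x"
    using A x meet_closed[OF A x x] unfolding finite_boolean_algebra_def by blast+
  then show ?thesis by simp
qed

lemma leq_iff_meet:
  assumes A: "finite_boolean_algebra A" and x: "x \<in> carrier A" and y: "y \<in> carrier A"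
  shows "leq A x y \<longleftrightarrow> meet A x y = x"
proof
  assume "leq A x y"
  then have "meet A x (join A x y) = meet A x y"
    unfolding leq_def by simp
  then show "meet A x y = x"
    using A x y unfolding finite_boolean_algebra_def by simp
next
  assume "meet A x y = x"
  then have "meet A y x = x" using meet_commute[OF A x y] by simp
  moreover have "join A y (meet A y x) = y"
    using A x y unfolding finite_boolean_algebra_def by blast
  ultimately have "join A y x = y" by simp
  then show "leq A x y"
    using A x y by (simp add: finite_boolean_algebra_def leq_def)
qed

lemma meet_closed_set_has_least:
  assumes A: "finite_boolean_algebra A" and S: "S \<subseteq> carrier A" "finite S" "x \<in> S"
    and closed: "\<And>y z. y \<in> S \<Longrightarrow> z \<in> S \<Longrightarrow> meet A y z \<in> S"
  shows "\<exists>c\<in>S. \<forall>z\<in>S. meet A c z = c"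
proof -
  have "\<exists>c\<in>S. \<forall>z\<in>G. meet A c z = c" if "finite G" "G \<subseteq> S" for G
    using that
  proof (induction G rule: finite_induct)
    case empty
    then show ?case using S(3) by blast
  next
    case (insert w G)
    then obtain c where c: "c \<in> S" "\<forall>z\<in>G. meet A c z = c" by blast
    have cw: "c \<in> carrier A" "w \<in> carrier A" "w \<in> S"
      using c(1) insert.prems S(1) by auto
    have "meet A (meet A c w) z = meet A c w" if "z \<in> insert w G" for z
    proof (cases "z = w")
      case True
      then show ?thesis
        using meet_assoc[OF A cw(1,2,2)] meet_idem[OF A cw(2)] by simp
    next
      case False
      then have "z \<in> G" "z \<in> carrier A" using that insert.prems S(1) by auto
      then show ?thesis
        using c(2) meet_assoc[OF A cw(1,2)] meet_assoc[OF A cw(1) _ cw(2)]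
          meet_commute[OF A cw(2)] by metis
    qed
    then show ?case using closed[OF c(1) cw(3)] by blast
  qed
  then show ?thesis using S by blast
qed

lemma
  assumes "sym_qual_formalism A U \<Phi>"
  shows sqf_finite_naa: "finite_naa A"
    and sqf_nonempty: "U \<noteq> {}"
    and sqf_zero: "\<Phi> (zero A) = {}"
    and sqf_subset: "r \<in> carrier A \<Longrightarrow> \<Phi> r \<subseteq> U \<times> U"
    and sqf_conv: "r \<in> carrier A \<Longrightarrow> \<Phi> (conv A r) = (\<Phi> r)\<inverse>"
    and sqf_meet: "r \<in> carrier A \<Longrightarrow> r' \<in> carrier A \<Longrightarrow> \<Phi> (meet A r r') = \<Phi> r \<inter> \<Phi> r'"
    and sqf_join: "r \<in> carrier A \<Longrightarrow> r' \<in> carrier A \<Longrightarrow> \<Phi> (join A r r') = \<Phi> r \<union> \<Phi> r'"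
    and sqf_comp: "r \<in> carrier A \<Longrightarrow> r' \<in> carrier A \<Longrightarrow>
      (\<Phi> r O \<Phi> r') \<inter> \<Phi> (univ A) \<subseteq> \<Phi> (comp A r r')"
  using assms by (simp_all add: sym_qual_formalism_def)

lemma sqf_boolean_algebra: "sym_qual_formalism A U \<Phi> \<Longrightarrow> finite_boolean_algebra A"
  using sqf_finite_naa unfolding finite_naa_def by blast

lemma sqf_mono:
  assumes F: "sym_qual_formalism A U \<Phi>"
    and r: "r \<in> carrier A" and r': "r' \<in> carrier A" and le: "leq A r r'"
  shows "\<Phi> r \<subseteq> \<Phi> r'"
proof -
  have "\<Phi> r' = \<Phi> r \<union> \<Phi> r'"
    using sqf_join[OF F r r'] le unfolding leq_def by simp
  then show ?thesis by blast
qed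

lemma sqf_subset_univ:
  assumes F: "sym_qual_formalism A U \<Phi>" and r: "r \<in> carrier A"
  shows "\<Phi> r \<subseteq> \<Phi> (univ A)"
proof -
  have A: "finite_boolean_algebra A" using sqf_boolean_algebra[OF F] .
  have "\<Phi> r = \<Phi> r \<inter> \<Phi> (univ A)"
    using sqf_meet[OF F r univ_closed[OF A]] meet_univ[OF A r] by simp
  then show ?thesis by blast
qed

lemma sqf_atom_below:
  assumes F: "sym_qual_formalism A U \<Phi>" and x: "x \<in> carrier A" and p: "p \<in> \<Phi> x"
  shows "\<exists>b. is_atom A b \<and> leq A b x \<and> p \<in> \<Phi> b"
proof -
  have A: "finite_boolean_algebra A" using sqf_boolean_algebra[OF F] .
  define S where "S = {z \<in> carrier A. p \<in> \<Phi> z}"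
  have "finite S" using A unfolding S_def finite_boolean_algebra_def by simp
  then obtain b where b: "b \<in> S" and least: "\<forall>z\<in>S. meet A b z = b"
    using meet_closed_set_has_least[OF A, of S x] x p sqf_meet[OF F] meet_closed[OF A]
    unfolding S_def by auto
  have bA: "b \<in> carrier A" and pb: "p \<in> \<Phi> b" using b unfolding S_def by auto
  have "y = zero A \<or> y = b" if y: "y \<in> carrier A" and "leq A y b" for y
  proof (cases "p \<in> \<Phi> y")
    case True
    then have "meet A b y = b" using least y unfolding S_def by blast
    then show ?thesis
      using \<open>leq A y b\<close> leq_iff_meet[OF A y bA] meet_commute[OF A y bA] by simp
  next
    case False
    have "p \<in> \<Phi> (univ A)" using sqf_subset_univ[OF F x] p by blast
    then have "p \<in> \<Phi> (neg A y)"
      using False sqf_join[OF F y neg_closed[OF A y]] join_neg[OF A y] by auto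
    then have "meet A b (neg A y) = b"
      using least neg_closed[OF A y] unfolding S_def by blast
    then have "y = meet A (meet A y b) (neg A y)"
      using \<open>leq A y b\<close> leq_iff_meet[OF A y bA] meet_assoc[OF A y bA neg_closed[OF A y]]
      by simp
    also have "\<dots> = zero A"
      using \<open>leq A y b\<close> leq_iff_meet[OF A y bA] meet_neg[OF A y] by simp
    finally show ?thesis ..
  qed
  moreover have "b \<noteq> zero A" using pb sqf_zero[OF F] by auto
  ultimately have "is_atom A b" using bA unfolding is_atom_def by blast
  moreover have "leq A b x"
    using least x p leq_iff_meet[OF A bA x] unfolding S_def by auto
  ultimately show ?thesis using pb by blast
qed

locale sqf_family =
  fixes m :: nat
    and Alg :: "nat \<Rightarrow> 'a naa"
    and U :: "'u set"
    and \<Phi> :: "nat \<Rightarrow> 'a \<Rightarrow> ('u \<times> 'u) set"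
    and Rp :: "('u \<times> 'u) set"
  assumes m_pos: "0 < m"
    and formalism: "\<And>i. i < m \<Longrightarrow> sym_qual_formalism (Alg i) U (\<Phi> i)"
begin

definition interp :: "(nat \<Rightarrow> 'a) \<Rightarrow> ('u \<times> 'u) set" where
  "interp R = (\<Inter>i<m. \<Phi> i (R i)) \<inter> Rp"

lemma mrels_carrier: "R \<in> mrels m Alg \<Longrightarrow> i < m \<Longrightarrow> R i \<in> carrier (Alg i)"
  unfolding mrels_def by blast

lemma interp_subset:
  assumes "R \<in> mrels m Alg"
  shows "interp R \<subseteq> U \<times> U"
proof -
  have "interp R \<subseteq> \<Phi> 0 (R 0)" using m_pos unfolding interp_def by blast
  then show ?thesis using sqf_subset[OF formalism[OF m_pos] mrels_carrier[OF assms m_pos]] by blast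
qed

lemma interp_mzero: "interp (mzero m Alg) = {}"
proof -
  have "interp (mzero m Alg) \<subseteq> \<Phi> 0 (zero (Alg 0))"
    using m_pos unfolding interp_def mzero_def mlift_def by auto
  then show ?thesis using sqf_zero[OF formalism[OF m_pos]] by blast
qed

lemma interp_mconv:
  assumes R: "R \<in> mrels m Alg" and Rp_sym: "Rp = Rp\<inverse>"
  shows "interp (mconv m Alg R) = (interp R)\<inverse>"
proof -
  have "interp (mconv m Alg R) = (\<Inter>i<m. (\<Phi> i (R i))\<inverse>) \<inter> Rp\<inverse>"
    unfolding interp_def mconv_def mlift_def using R Rp_sym sqf_conv[OF formalism] mrels_carrier
    by (intro arg_cong2[where f="(\<inter>)"] INF_cong) auto
  then show ?thesis unfolding interp_def by auto
qed

lemma interp_mmeet: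
  assumes "R \<in> mrels m Alg" "R' \<in> mrels m Alg"
  shows "interp (mmeet m Alg R R') = interp R \<inter> interp R'"
proof -
  have "interp (mmeet m Alg R R') = (\<Inter>i<m. \<Phi> i (R i) \<inter> \<Phi> i (R' i)) \<inter> Rp"
    unfolding interp_def mmeet_def mlift_def using assms sqf_meet[OF formalism] mrels_carrier
    by (intro arg_cong2[where f="(\<inter>)"] INF_cong) auto
  then show ?thesis unfolding interp_def by auto
qed

lemma interp_mcomp:
  assumes R: "R \<in> mrels m Alg" and R': "R' \<in> mrels m Alg"
  shows "(interp R O interp R') \<inter> interp (muniv m Alg) \<subseteq> interp (mcomp m Alg R R')"
proof
  fix q assume "q \<in> (interp R O interp R') \<inter> interp (muniv m Alg)"
  then obtain x y z where q: "q = (x, z)" and xy: "(x, y) \<in> interp R"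
    and yz: "(y, z) \<in> interp R'" and xz: "(x, z) \<in> interp (muniv m Alg)"
    by blast
  have "(x, z) \<in> \<Phi> i (comp (Alg i) (R i) (R' i))" if i: "i < m" for i
  proof -
    have "(x, z) \<in> (\<Phi> i (R i) O \<Phi> i (R' i)) \<inter> \<Phi> i (univ (Alg i))"
      using xy yz xz i unfolding interp_def muniv_def mlift_def by auto
    then show ?thesis
      using sqf_comp[OF formalism[OF i] mrels_carrier[OF R i] mrels_carrier[OF R' i]] by blast
  qed
  moreover have "(x, z) \<in> Rp" using xz unfolding interp_def by blast
  ultimately show "q \<in> interp (mcomp m Alg R R')"
    unfolding q interp_def mcomp_def mlift_def by simp
qed

lemma interp_basics:
  assumes R: "R \<in> mrels m Alg"
  shows "interp R = (\<Union>B\<in>basics_in m Alg R. interp B)"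
proof
  show "interp R \<subseteq> (\<Union>B\<in>basics_in m Alg R. interp B)"
  proof
    fix p assume p: "p \<in> interp R"
    have "\<exists>b. is_atom (Alg i) b \<and> leq (Alg i) b (R i) \<and> p \<in> \<Phi> i b" if i: "i < m" for i
      using sqf_atom_below[OF formalism[OF i] mrels_carrier[OF R i]] p i
      unfolding interp_def by blast
    then obtain f
      where f: "\<And>i. i < m \<Longrightarrow> is_atom (Alg i) (f i) \<and> leq (Alg i) (f i) (R i) \<and> p \<in> \<Phi> i (f i)"
      by metis
    have "mlift m f \<in> basics_in m Alg R"
      using f unfolding basics_in_def mbasic_def mleq_def mrels_def mlift_def is_atom_def
      by auto
    moreover have "p \<in> interp (mlift m f)"
      using f p unfolding interp_def mlift_def by auto
    ultimately show "p \<in> (\<Union>B\<in>basics_in m Alg R. interp B)" by blast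
  qed
next
  have "\<Phi> i (B i) \<subseteq> \<Phi> i (R i)" if B: "B \<in> basics_in m Alg R" and i: "i < m" for B i
    using sqf_mono[OF formalism[OF i] _ mrels_carrier[OF R i]] B i
    unfolding basics_in_def mbasic_def mleq_def mrels_def by auto
  then show "(\<Union>B\<in>basics_in m Alg R. interp B) \<subseteq> interp R"
    unfolding interp_def by blast
qed

context
  fixes Proj :: "nat \<Rightarrow> nat \<Rightarrow> 'a \<Rightarrow> 'a"
  assumes proj_op: "\<And>i j. i < m \<Longrightarrow> j < m \<Longrightarrow> i \<noteq> j \<Longrightarrow>
      projection_operator (Alg i) (Alg j) (Proj i j)"
    and proj_sound: "\<And>i j b. i < m \<Longrightarrow> j < m \<Longrightarrow> i \<noteq> j \<Longrightarrow> is_atom (Alg i) b \<Longrightarrow>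
      \<Phi> i b \<inter> \<Phi> j (univ (Alg j)) \<inter> Rp \<subseteq> \<Phi> j (Proj i j b)"
begin

lemma proj_closed:
  "i < m \<Longrightarrow> j < m \<Longrightarrow> i \<noteq> j \<Longrightarrow> r \<in> carrier (Alg i) \<Longrightarrow> Proj i j r \<in> carrier (Alg j)"
  using proj_op unfolding projection_operator_def by blast

lemma proj_mono:
  assumes ij: "i < m" "j < m" "i \<noteq> j"
    and r: "r \<in> carrier (Alg i)" "r' \<in> carrier (Alg i)" and le: "leq (Alg i) r r'"
  shows "leq (Alg j) (Proj i j r) (Proj i j r')"
  using proj_op[OF ij] r le unfolding projection_operator_def leq_def by metis

lemma interp_subset_proj:
  assumes R: "R \<in> mrels m Alg" and ij: "i < m" "j < m" "i \<noteq> j"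
  shows "interp R \<subseteq> \<Phi> j (Proj i j (R i))"
proof
  fix p assume p: "p \<in> interp R"
  obtain b where b: "is_atom (Alg i) b" "leq (Alg i) b (R i)" "p \<in> \<Phi> i b"
    using sqf_atom_below[OF formalism[OF ij(1)] mrels_carrier[OF R ij(1)]] p ij(1)
    unfolding interp_def by blast
  have bA: "b \<in> carrier (Alg i)" using b(1) unfolding is_atom_def by blast
  have "p \<in> \<Phi> j (univ (Alg j))" "p \<in> Rp"
    using sqf_subset_univ[OF formalism[OF ij(2)] mrels_carrier[OF R ij(2)]] p ij(2)
    unfolding interp_def by blast+
  then have "p \<in> \<Phi> j (Proj i j b)" using proj_sound[OF ij b(1)] b(3) by blast
  then show "p \<in> \<Phi> j (Proj i j (R i))"
    using sqf_mono[OF formalism[OF ij(2)] proj_closed[OF ij bA]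
        proj_closed[OF ij mrels_carrier[OF R ij(1)]] proj_mono[OF ij bA _ b(2)]]
      mrels_carrier[OF R ij(1)] by blast
qed

lemma interp_proj_step:
  assumes step: "proj_step m Alg Proj R S" and R: "R \<in> mrels m Alg"
  shows "S \<in> mrels m Alg \<and> interp S = interp R"
proof -
  obtain i j where ij: "i < m" "j < m" "i \<noteq> j"
    and S: "S = R(j := meet (Alg j) (R j) (Proj i j (R i)))"
    using step unfolding proj_step_def by blast
  have Rj: "R j \<in> carrier (Alg j)" and PRi: "Proj i j (R i) \<in> carrier (Alg j)"
    using mrels_carrier[OF R] proj_closed[OF ij] ij by auto
  have A: "finite_boolean_algebra (Alg j)" using sqf_boolean_algebra[OF formalism[OF ij(2)]] .
  have "S \<in> mrels m Alg"
    using R ij meet_closed[OF A Rj PRi] unfolding S mrels_def by auto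
  moreover have "\<Phi> k (S k) = (if k = j then \<Phi> j (R j) \<inter> \<Phi> j (Proj i j (R i)) else \<Phi> k (R k))"
    for k
    using sqf_meet[OF formalism[OF ij(2)] Rj PRi] unfolding S by auto
  then have "interp S = interp R \<inter> \<Phi> j (Proj i j (R i))"
    using ij(2) unfolding interp_def by (auto split: if_splits)
  ultimately show ?thesis using interp_subset_proj[OF R ij] by blast
qed

lemma interp_proj_closure:
  assumes R: "R \<in> mrels m Alg" and closure: "is_proj_closure m Alg Proj R S"
  shows "interp S = interp R"
proof -
  have "(proj_step m Alg Proj)\<^sup>*\<^sup>* R S" using closure unfolding is_proj_closure_def by blast
  then have "S \<in> mrels m Alg \<and> interp S = interp R"
    by (induction rule: rtranclp_induct) (use R interp_proj_step in auto)
  then show ?thesis by blast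
qed

end

end

theorem mainTheorem3:
  fixes m :: nat
    and Alg :: "nat \<Rightarrow> 'a naa"
    and Proj :: "nat \<Rightarrow> nat \<Rightarrow> 'a \<Rightarrow> 'a"
    and U :: "'u set"
    and \<Phi> :: "nat \<Rightarrow> 'a \<Rightarrow> ('u \<times> 'u) set"
    and Rp :: "('u \<times> 'u) set"
  assumes m_pos: "1 \<le> m"
    and formalisms: "\<forall>i<m. sym_qual_formalism (Alg i) U (\<Phi> i)"
    and Rp_sym: "Rp = Rp\<inverse>"
    and proj_op: "\<forall>i<m. \<forall>j<m. i \<noteq> j \<longrightarrow> projection_operator (Alg i) (Alg j) (Proj i j)"
    and proj_sound: "\<forall>i<m. \<forall>j<m. i \<noteq> j \<longrightarrow> (\<forall>b. is_atom (Alg i) b \<longrightarrow>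
           \<Phi> i b \<inter> \<Phi> j (univ (Alg j)) \<inter> Rp \<subseteq> \<Phi> j (Proj i j b))"
  shows "sequential_formalism m Alg Proj U (\<lambda>R. (\<Inter>i\<in>{..<m}. \<Phi> i (R i)) \<inter> Rp)"
proof -
  interpret sqf_family m Alg U \<Phi> Rp
    using m_pos formalisms by unfold_locales auto
  have \<phi>: "(\<lambda>R. (\<Inter>i\<in>{..<m}. \<Phi> i (R i)) \<inter> Rp) = interp"
    by (simp add: fun_eq_iff interp_def)
  have multi_algebra: "finite_multi_algebra m Alg Proj"
    using sqf_finite_naa formalisms proj_op unfolding finite_multi_algebra_def by blast
  have nonempty: "U \<noteq> {}"
    using sqf_nonempty formalisms m_pos by auto
  have closure: "interp S = interp R"
    if "R \<in> mrels m Alg" "is_proj_closure m Alg Proj R S" for R S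
    using interp_proj_closure[of Proj, OF _ _ that] proj_op proj_sound by blast
  show ?thesis
    unfolding sequential_formalism_def \<phi>
    by (intro conjI ballI allI impI multi_algebra nonempty closure interp_subset
        interp_mconv[OF _ Rp_sym] interp_mzero interp_mcomp interp_mmeet interp_basics)
qed

end
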